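(* Let $\mathcal{CP}$ be a $d$-dimensional cube packing with $N$ cubes, and write $N=4q+r$ with integers $q\geq 0$, $0\le r\le 3$. Then $$m_1(\mathcal{CP})=\left(\frac{3^d}{4^d}\right)N\quad\text{and}\quad m_1(\mathcal{CP})+N(N-1)2^{-d}+2^{-d}\,d\,\{2q(q-1)+rq\}\le m_2(\mathcal{CP}).$$
   Context: A $d$-dimensional cube packing is a $4\mathbb{Z}^d$-invariant set of pairwise disjoint translates $y+[0,2[^d$ with $y\in\mathbb{Z}^d$; its number of cubes $N$ is the number of $4\mathbb{Z}^d$-orbits of its cubes. For $z\in\mathbb{Z}^d$, $N_z(\mathcal{CP})$ is the number of cubes of $\mathcal{CP}$ contained in $z+[0,4[^d$. For a $4\mathbb{Z}^d$-periodic function $g$ on $\mathbb{Z}^d$, its average is $E(g)=4^{-d}\sum_{z\in\{0,1,2,3\}^d}g(z)$, and the $i$-th moment of $\mathcal{CP}$ is $m_i(\mathcal{CP})=E(N_z(\mathcal{CP})^i)$. *)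

theory Defs
  imports "HOL-Analysis.Analysis"
begin

text \<open>Dimension d = CARD('d). Points of Z^d are int ^ 'd, points of R^d are real ^ 'd.
  A cube packing is represented by the set of its translation vectors y (cube y + [0,2[^d).\<close>

definition cube :: "int ^ 'd::finite \<Rightarrow> (real ^ 'd) set" where
  "cube y = {x. \<forall>i. real_of_int (y $ i) \<le> x $ i \<and> x $ i < real_of_int (y $ i) + 2}"

definition box4 :: "int ^ 'd::finite \<Rightarrow> (real ^ 'd) set" where
  "box4 z = {x. \<forall>i. real_of_int (z $ i) \<le> x $ i \<and> x $ i < real_of_int (z $ i) + 4}"

definition cube_packing :: "(int ^ 'd::finite) set \<Rightarrow> bool" where
  "cube_packing CP \<longleftrightarrow>
     (\<forall>y\<in>CP. \<forall>k::int ^ 'd. y + (\<chi> i. 4 * k $ i) \<in> CP) \<and>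
     (\<forall>y\<in>CP. \<forall>y'\<in>CP. y \<noteq> y' \<longrightarrow> cube y \<inter> cube y' = {})"

text \<open>Number of cubes: number of 4Z^d-orbits of cubes (orbits identified by residues mod 4).\<close>
definition num_cubes :: "(int ^ 'd::finite) set \<Rightarrow> nat" where
  "num_cubes CP = card ((\<lambda>y. \<chi> i. y $ i mod 4) ` CP)"

definition N_z :: "(int ^ 'd::finite) set \<Rightarrow> int ^ 'd \<Rightarrow> nat" where
  "N_z CP z = card {y\<in>CP. cube y \<subseteq> box4 z}"

definition avg :: "(int ^ 'd::finite \<Rightarrow> real) \<Rightarrow> real" where
  "avg g = (1 / 4 ^ CARD('d)) * (\<Sum>z\<in>{z::int ^ 'd. \<forall>i. 0 \<le> z $ i \<and> z $ i \<le> 3}. g z)"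

definition moment :: "nat \<Rightarrow> (int ^ 'd::finite) set \<Rightarrow> real" where
  "moment k CP = avg (\<lambda>z. real (N_z CP z) ^ k)"

end

(*
  Every cube of the packing is determined, up to 4Z^d, by its residue vector c in {0..3}^d, and
  it has a translate inside z + [0,4[^d iff (c_i - z_i) mod 4 <= 2 for all i. So N_z is a sum over
  residues of products of one-dimensional indicators, and averaging over z factorises over the
  coordinates: each residue contributes 3^d to the sum of N_z, and each pair (c, c') contributes
  prod_i (2 + [c_i = c'_i]) to the sum of N_z^2. Off the diagonal this product is at least
  2^(d-1) (2 + #{i. c_i = c'_i}); for a fixed coordinate i the number of pairs with c_i = c'_i is
  the sum of the squares of four class sizes adding up to N = 4q + r, hence at least
  4q^2 + 2rq + r.
*)

theory Submission
  imports Defs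
begin

lemma int_le_power2: "(x::int) \<le> x\<^sup>2"
proof (cases "x \<le> 0")
  case True
  then show ?thesis
    using zero_le_power2[of x] by linarith
next
  case False
  then show ?thesis
    using self_le_power[of x 2] by simp
qed

lemma sum_power2_ge:
  fixes m :: "'a \<Rightarrow> int"
  assumes "sum m B = int (card B) * q + r"
  shows "int (card B) * q\<^sup>2 + 2 * r * q + r \<le> (\<Sum>b\<in>B. (m b)\<^sup>2)"
proof -
  have "r = (\<Sum>b\<in>B. m b - q)"
    using assms by (simp add: sum_subtractf)
  also have "\<dots> \<le> (\<Sum>b\<in>B. (m b - q)\<^sup>2)"
    by (intro sum_mono int_le_power2)
  also have "\<dots> = (\<Sum>b\<in>B. (m b)\<^sup>2 - 2 * q * m b + q\<^sup>2)"
    by (simp add: power2_diff algebra_simps)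
  also have "\<dots> = (\<Sum>b\<in>B. (m b)\<^sup>2) - 2 * q * sum m B + int (card B) * q\<^sup>2"
    by (simp add: sum.distrib sum_subtractf sum_distrib_left)
  finally show ?thesis
    using assms by (simp add: algebra_simps power2_eq_square)
qed

lemma power_mult_add_sum_le_prod_add:
  fixes a :: real and \<delta> :: "'i \<Rightarrow> real"
  assumes "finite I" "0 \<le> a" "\<And>i. i \<in> I \<Longrightarrow> 0 \<le> \<delta> i"
  shows "a ^ card I * (a + sum \<delta> I) \<le> a * (\<Prod>i\<in>I. a + \<delta> i)"
  using assms(1,3)
proof (induction I rule: finite_induct)
  case empty
  then show ?case by simp
next
  case (insert j I)
  have "0 \<le> \<delta> j" "0 \<le> sum \<delta> I"
    using insert.prems by (auto intro: sum_nonneg)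
  then have *: "a * (a + (\<delta> j + sum \<delta> I)) \<le> (a + \<delta> j) * (a + sum \<delta> I)"
    by (simp add: algebra_simps assms(2))
  have "a ^ card (insert j I) * (a + sum \<delta> (insert j I))
      = a ^ card I * (a * (a + (\<delta> j + sum \<delta> I)))"
    using insert.hyps by simp
  also have "\<dots> \<le> a ^ card I * ((a + \<delta> j) * (a + sum \<delta> I))"
    using * assms(2) by (intro mult_left_mono) auto
  also have "\<dots> = (a + \<delta> j) * (a ^ card I * (a + sum \<delta> I))"
    by (simp add: ac_simps)
  also have "\<dots> \<le> (a + \<delta> j) * (a * (\<Prod>i\<in>I. a + \<delta> i))"
    using insert assms(2) by (intro mult_left_mono) auto
  finally show ?case
    using insert.hyps by (simp add: mult.left_commute)
qed

lemma sum_card_fibres_eq_sum_power2: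
  assumes "finite R" "finite B" "f ` R \<subseteq> B"
  shows "(\<Sum>c\<in>R. card {c'\<in>R. f c' = f c}) = (\<Sum>b\<in>B. card {c\<in>R. f c = b} ^ 2)"
proof -
  have "(\<Sum>c\<in>R. card {c'\<in>R. f c' = f c})
      = (\<Sum>b\<in>B. \<Sum>c\<in>{c\<in>R. f c = b}. card {c'\<in>R. f c' = f c})"
    by (rule sum.group[OF assms, symmetric])
  also have "\<dots> = (\<Sum>b\<in>B. card {c\<in>R. f c = b} ^ 2)"
    by (simp add: power2_eq_square)
  finally show ?thesis .
qed

lemma sum_card_fibres_ge:
  assumes "finite R" "finite B" "f ` R \<subseteq> B" "card R = card B * q + r"
  shows "card B * q\<^sup>2 + 2 * r * q + r \<le> (\<Sum>c\<in>R. card {c'\<in>R. f c' = f c})"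
proof -
  let ?n = "\<lambda>b. card {c\<in>R. f c = b}"
  have "sum ?n B = card R"
    using sum.group[OF assms(1-3), of "\<lambda>_. 1"] by (simp only: card_eq_sum)
  then have "int (card B) * (int q)\<^sup>2 + 2 * int r * int q + int r
      \<le> (\<Sum>b\<in>B. (int (?n b))\<^sup>2)"
    using assms(4) by (intro sum_power2_ge) (simp flip: of_nat_sum)
  then have "int (card B * q\<^sup>2 + 2 * r * q + r) \<le> int (\<Sum>b\<in>B. ?n b ^ 2)"
    by (simp add: of_nat_sum)
  then have "card B * q\<^sup>2 + 2 * r * q + r \<le> (\<Sum>b\<in>B. ?n b ^ 2)"
    by (simp only: of_nat_le_iff)
  then show ?thesis
    using sum_card_fibres_eq_sum_power2[OF assms(1-3)] by simp
qed

lemma vec_components_eq_image_PiE: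
  "{z::'a ^ 'd::finite. \<forall>i. z $ i \<in> T} = vec_lambda ` PiE UNIV (\<lambda>_. T)"
  by (auto simp: image_iff intro!: bexI[of _ "vec_nth _"])

lemma finite_vec_components:
  "finite T \<Longrightarrow> finite {z::'a ^ 'd::finite. \<forall>i. z $ i \<in> T}"
  unfolding vec_components_eq_image_PiE by (intro finite_imageI finite_PiE) auto

lemma sum_prod_vec_components:
  fixes f :: "'d::finite \<Rightarrow> 'a \<Rightarrow> 'b::comm_semiring_1"
  assumes "finite T"
  shows "(\<Sum>z\<in>{z::'a ^ 'd. \<forall>i. z $ i \<in> T}. \<Prod>i\<in>UNIV. f i (z $ i))
    = (\<Prod>i\<in>UNIV. \<Sum>t\<in>T. f i t)"
proof -
  have "inj_on vec_lambda (PiE (UNIV::'d set) (\<lambda>_. T))"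
    by (intro inj_onI) (metis vec_lambda_inverse UNIV_I)
  then show ?thesis
    unfolding vec_components_eq_image_PiE using assms by (simp add: sum.reindex prod_sum_PiE)
qed

lemma cube_subset_box4_iff:
  "cube y \<subseteq> box4 z \<longleftrightarrow> (\<forall>i. z $ i \<le> y $ i \<and> y $ i \<le> z $ i + 2)"
proof
  assume sub: "cube y \<subseteq> box4 z"
  show "\<forall>i. z $ i \<le> y $ i \<and> y $ i \<le> z $ i + 2"
  proof
    fix i
    have "(\<chi> j. of_int (y $ j)) \<in> box4 z" "(\<chi> j. of_int (y $ j) + 3/2) \<in> box4 z"
      using sub by (auto simp: cube_def)
    then have "of_int (z $ i) \<le> (of_int (y $ i) :: real)"
      and "of_int (y $ i) + 3/2 < (of_int (z $ i) + 4 :: real)"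
      by (auto simp: box4_def)
    then show "z $ i \<le> y $ i \<and> y $ i \<le> z $ i + 2"
      by linarith
  qed
next
  assume bounds: "\<forall>i. z $ i \<le> y $ i \<and> y $ i \<le> z $ i + 2"
  show "cube y \<subseteq> box4 z"
  proof
    fix x assume "x \<in> cube y"
    have "of_int (z $ i) \<le> x $ i \<and> x $ i < of_int (z $ i) + 4" for i
    proof -
      have "of_int (y $ i) \<le> x $ i" "x $ i < of_int (y $ i) + 2"
        using \<open>x \<in> cube y\<close> by (auto simp: cube_def)
      moreover have "z $ i \<le> y $ i" "y $ i \<le> z $ i + 2"
        using bounds by auto
      ultimately show ?thesis
        by linarith
    qed
    then show "x \<in> box4 z"
      by (simp add: box4_def)
  qed
qed

definition mod4 :: "int ^ 'd::finite \<Rightarrow> int ^ 'd" where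
  "mod4 y = (\<chi> i. y $ i mod 4)"

lemma mod4_image_subset: "mod4 ` CP \<subseteq> {c. \<forall>i. c $ i \<in> {0..3}}"
  by (auto simp: mod4_def)

lemma mod4_mem_periodic:
  assumes periodic: "\<And>y k. y \<in> CP \<Longrightarrow> y + (\<chi> i. 4 * k $ i) \<in> CP"
    and "y0 \<in> CP" and "mod4 y = mod4 y0"
  shows "y \<in> CP"
proof -
  have "y $ i mod 4 = y0 $ i mod 4" for i
    using assms(3) by (simp add: mod4_def vec_eq_iff)
  then have "4 dvd y $ i - y0 $ i" for i
    by (simp add: mod_eq_dvd_iff)
  then have "y $ i = y0 $ i + 4 * ((y $ i - y0 $ i) div 4)" for i
    by simp
  then have "y = y0 + (\<chi> i. 4 * ((\<chi> j. (y $ j - y0 $ j) div 4) $ i))"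
    by (simp add: vec_eq_iff)
  then show ?thesis
    using periodic[OF assms(2)] by metis
qed

lemma N_z_eq_card_mod4:
  assumes periodic: "\<And>y k. y \<in> CP \<Longrightarrow> y + (\<chi> i. 4 * k $ i) \<in> CP"
  shows "N_z CP z = card {c \<in> mod4 ` CP. \<forall>i. (c $ i - z $ i) mod 4 \<le> 2}"
proof -
  \<comment> \<open>the representative of the residue class c in the window z + [0,4[^d\<close>
  define lift :: "int ^ 'a \<Rightarrow> int ^ 'a"
    where "lift c = (\<chi> i. z $ i + (c $ i - z $ i) mod 4)" for c
  let ?A = "{y \<in> CP. cube y \<subseteq> box4 z}"
  let ?C = "{c \<in> mod4 ` CP. \<forall>i. (c $ i - z $ i) mod 4 \<le> 2}"
  have "bij_betw mod4 ?A ?C"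
  proof (rule bij_betw_byWitness[where f' = lift])
    have "z $ i + (y $ i mod 4 - z $ i) mod 4 = y $ i \<and> (y $ i mod 4 - z $ i) mod 4 \<le> 2"
      if "z $ i \<le> y $ i" "y $ i \<le> z $ i + 2" for y :: "int ^ 'a" and i
      using that by presburger
    then show "\<forall>y\<in>?A. lift (mod4 y) = y" and "mod4 ` ?A \<subseteq> ?C"
      by (auto simp: cube_subset_box4_iff lift_def mod4_def vec_eq_iff)
    have "(z $ i + (y $ i mod 4 - z $ i) mod 4) mod 4 = y $ i mod 4" for y :: "int ^ 'a" and i
      by presburger
    then have lift_mod4: "mod4 (lift (mod4 y)) = mod4 y" for y
      by (simp add: lift_def mod4_def vec_eq_iff)
    then show "\<forall>c\<in>?C. mod4 (lift c) = c"
      by auto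
    show "lift ` ?C \<subseteq> ?A"
    proof (rule image_subsetI)
      fix c assume c: "c \<in> ?C"
      then obtain y0 where "y0 \<in> CP" "c = mod4 y0"
        by auto
      then have "lift c \<in> CP"
        using mod4_mem_periodic[OF periodic _ lift_mod4] by simp
      moreover have "cube (lift c) \<subseteq> box4 z"
        using c by (simp add: cube_subset_box4_iff lift_def)
      ultimately show "lift c \<in> ?A"
        by simp
    qed
  qed
  then show ?thesis
    unfolding N_z_def by (rule bij_betw_same_card)
qed

text \<open>\<open>fits c t = 1\<close> iff an interval \<open>y + [0,2[\<close> with \<open>y mod 4 = c mod 4\<close> has a translate
  by \<open>4\<int>\<close> inside \<open>t + [0,4[\<close>.\<close>

definition fits :: "int \<Rightarrow> int \<Rightarrow> real" where
  "fits c t = (if (c - t) mod 4 \<le> 2 then 1 else 0)"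

lemma fits_mod4: "fits (c mod 4) t = fits c t"
  by (simp add: fits_def mod_diff_left_eq)

lemma sum_fits_mult:
  "(\<Sum>t\<in>{0..3}. fits a t * fits b t) = 2 + of_bool (a mod 4 = b mod 4)"
proof -
  have "{0..3::int} = {0, 1, 2, 3}"
    by auto
  then have "(\<Sum>t\<in>{0..3}. fits a t * fits b t)
      = (\<Sum>t\<in>{0, 1, 2, 3}. fits (a mod 4) t * fits (b mod 4) t)"
    by (simp add: fits_mod4)
  moreover have "a mod 4 \<in> {0, 1, 2, 3}" "b mod 4 \<in> {0, 1, 2, 3}"
    by auto
  ultimately show ?thesis
    by (elim insertE emptyE; simp add: fits_def)
qed

lemma sum_fits: "(\<Sum>t\<in>{0..3}. fits a t) = 3"
proof -
  have idem: "fits a t * fits a t = fits a t" for t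
    by (simp add: fits_def)
  show ?thesis
    using sum_fits_mult[of a a] unfolding idem by simp
qed

lemma N_z_eq_sum_prod_fits:
  assumes periodic: "\<And>y k. y \<in> CP \<Longrightarrow> y + (\<chi> i. 4 * k $ i) \<in> CP"
  shows "real (N_z CP z) = (\<Sum>c\<in>mod4 ` CP. \<Prod>i\<in>UNIV. fits (c $ i) (z $ i))"
proof -
  let ?P = "\<lambda>c. \<forall>i. (c $ i - z $ i) mod 4 \<le> 2"
  have "finite (mod4 ` CP)"
    using finite_subset[OF mod4_image_subset finite_vec_components] by simp
  then have "real (N_z CP z) = (\<Sum>c\<in>mod4 ` CP. of_bool (?P c))"
    by (simp add: N_z_eq_card_mod4[OF periodic] sum.inter_filter[symmetric] of_bool_def)
  also have "\<dots> = (\<Sum>c\<in>mod4 ` CP. \<Prod>i\<in>UNIV. fits (c $ i) (z $ i))"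
    by (auto simp: fits_def prod_zero_iff intro!: sum.cong)
  finally show ?thesis .
qed

lemma avg_eq_sum_vec_components:
  "avg g = (\<Sum>z\<in>{z::int ^ 'd::finite. \<forall>i. z $ i \<in> {0..3}}. g z) / 4 ^ CARD('d)"
  by (simp add: avg_def)

lemma moment_1_eq:
  fixes CP :: "(int ^ 'd::finite) set"
  assumes periodic: "\<And>y k. y \<in> CP \<Longrightarrow> y + (\<chi> i. 4 * k $ i) \<in> CP"
  shows "moment 1 CP = 3 ^ CARD('d) / 4 ^ CARD('d) * card (mod4 ` CP)"
proof -
  let ?Z = "{z::int ^ 'd. \<forall>i. z $ i \<in> {0..3}}"
  have "moment 1 CP = (\<Sum>z\<in>?Z. \<Sum>c\<in>mod4 ` CP. \<Prod>i\<in>UNIV. fits (c $ i) (z $ i)) / 4 ^ CARD('d)"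
    by (simp add: moment_def avg_eq_sum_vec_components N_z_eq_sum_prod_fits[OF periodic])
  also have "\<dots> = (\<Sum>c\<in>mod4 ` CP. \<Sum>z\<in>?Z. \<Prod>i\<in>UNIV. fits (c $ i) (z $ i)) / 4 ^ CARD('d)"
    by (subst sum.swap) (rule refl)
  also have "\<dots> = (\<Sum>c\<in>mod4 ` CP. 3 ^ CARD('d)) / 4 ^ CARD('d)"
    using sum_prod_vec_components[of "{0..3}" "\<lambda>i. fits ((_ :: int ^ 'd) $ i)"]
    by (simp add: sum_fits)
  finally show ?thesis
    by simp
qed

lemma moment_2_eq:
  fixes CP :: "(int ^ 'd::finite) set"
  assumes periodic: "\<And>y k. y \<in> CP \<Longrightarrow> y + (\<chi> i. 4 * k $ i) \<in> CP"
  shows "moment 2 CP = (\<Sum>c\<in>mod4 ` CP. \<Sum>c'\<in>mod4 ` CP.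
    \<Prod>i\<in>UNIV. 2 + of_bool (c $ i = c' $ i)) / 4 ^ CARD('d)"
proof -
  let ?Z = "{z::int ^ 'd. \<forall>i. z $ i \<in> {0..3}}"
  let ?w = "\<lambda>c z. \<Prod>i\<in>UNIV. fits (c $ i) (z $ i)"
  have residue: "c $ i mod 4 = c $ i" if "c \<in> mod4 ` CP" for c i
    using that by (auto simp: mod4_def)
  have "moment 2 CP = (\<Sum>z\<in>?Z. \<Sum>c\<in>mod4 ` CP. \<Sum>c'\<in>mod4 ` CP. ?w c z * ?w c' z) / 4 ^ CARD('d)"
    by (simp add: moment_def avg_eq_sum_vec_components N_z_eq_sum_prod_fits[OF periodic]
        power2_eq_square sum_product)
  also have "\<dots> = (\<Sum>c\<in>mod4 ` CP. \<Sum>c'\<in>mod4 ` CP. \<Sum>z\<in>?Z. ?w c z * ?w c' z) / 4 ^ CARD('d)"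
    by (subst sum.swap, subst (2) sum.swap) (rule refl)
  also have "\<dots> = (\<Sum>c\<in>mod4 ` CP. \<Sum>c'\<in>mod4 ` CP.
      \<Prod>i\<in>UNIV. 2 + of_bool (c $ i = c' $ i)) / 4 ^ CARD('d)"
    using sum_prod_vec_components[of "{0..3}" "\<lambda>i t. fits ((_ :: int ^ 'd) $ i) t * fits (_ $ i) t"]
      residue
    by (simp add: prod.distrib[symmetric] sum_fits_mult cong: sum.cong)
  finally show ?thesis .
qed

lemma sum_pairs_coordinate_coincidences_ge:
  fixes R :: "(int ^ 'd::finite) set" and q r :: nat
  assumes R: "R \<subseteq> {c. \<forall>i. c $ i \<in> {0..3}}" and card_R: "card R = 4 * q + r"
  shows "real CARD('d) * real (4 * q\<^sup>2 + 2 * r * q + r)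
    \<le> (\<Sum>c\<in>R. \<Sum>c'\<in>R. \<Sum>i\<in>UNIV. of_bool (c $ i = c' $ i))"
proof -
  have fin: "finite R"
    using finite_subset[OF R finite_vec_components] by simp
  have coordinate:
    "real (4 * q\<^sup>2 + 2 * r * q + r) \<le> (\<Sum>c\<in>R. \<Sum>c'\<in>R. of_bool (c $ i = c' $ i))" for i
  proof -
    have "(\<lambda>c. c $ i) ` R \<subseteq> {0..3}"
      using R by blast
    then have "4 * q\<^sup>2 + 2 * r * q + r \<le> (\<Sum>c\<in>R. card {c'\<in>R. c' $ i = c $ i})"
      using sum_card_fibres_ge[OF fin finite_atLeastAtMost_int[of 0 3], of _ q r] card_R by simp
    then have "real (4 * q\<^sup>2 + 2 * r * q + r) \<le> (\<Sum>c\<in>R. real (card {c'\<in>R. c' $ i = c $ i}))"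
      unfolding of_nat_sum[symmetric] by (simp only: of_nat_le_iff)
    also have "\<dots> = (\<Sum>c\<in>R. \<Sum>c'\<in>R. of_bool (c $ i = c' $ i))"
      using fin by (simp add: of_bool_def sum.inter_filter[symmetric] eq_commute)
    finally show ?thesis .
  qed
  have "real CARD('d) * real (4 * q\<^sup>2 + 2 * r * q + r)
      = (\<Sum>i\<in>(UNIV :: 'd set). real (4 * q\<^sup>2 + 2 * r * q + r))"
    by simp
  also have "\<dots> \<le> (\<Sum>i\<in>UNIV. \<Sum>c\<in>R. \<Sum>c'\<in>R. of_bool (c $ i = c' $ i))"
    by (intro sum_mono coordinate)
  also have "\<dots> = (\<Sum>c\<in>R. \<Sum>c'\<in>R. \<Sum>i\<in>UNIV. of_bool (c $ i = c' $ i))"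
    by (subst sum.swap, subst (2) sum.swap) (rule refl)
  finally show ?thesis .
qed

lemma sum_pairs_prod_coincidences_ge:
  fixes R :: "(int ^ 'd::finite) set" and q r :: nat
  assumes R: "R \<subseteq> {c. \<forall>i. c $ i \<in> {0..3}}" and card_R: "card R = 4 * q + r"
  shows "3 ^ CARD('d) * real (card R) + 2 ^ CARD('d) * real (card R) * (real (card R) - 1)
      + 2 ^ CARD('d) * real CARD('d) * (2 * real q * (real q - 1) + real r * real q)
    \<le> (\<Sum>c\<in>R. \<Sum>c'\<in>R. \<Prod>i\<in>UNIV. 2 + of_bool (c $ i = c' $ i))"
proof -
  let ?d = "CARD('d)" and ?N = "real (card R)"
  let ?\<delta> = "\<lambda>(c :: int ^ 'd) c' i. of_bool (c $ i = c' $ i) :: real"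
  let ?S = "\<Sum>c\<in>R. \<Sum>c'\<in>R. \<Sum>i\<in>UNIV. ?\<delta> c c' i"
  let ?diagonal = "2 * 3 ^ ?d - 2 ^ ?d * (2 + real ?d)"
  have fin: "finite R"
    using finite_subset[OF R finite_vec_components] by simp
  \<comment> \<open>the correction term turns this into an equality on the diagonal\<close>
  have pointwise: "2 ^ ?d * (2 + (\<Sum>i\<in>UNIV. ?\<delta> c c' i)) + (if c = c' then ?diagonal else 0)
      \<le> 2 * (\<Prod>i\<in>UNIV. 2 + ?\<delta> c c' i)" for c c'
    using power_mult_add_sum_le_prod_add[of "UNIV :: 'd set" 2 "?\<delta> c c'"] by (cases "c = c'") auto
  have "2 * (3 ^ ?d * ?N + 2 ^ ?d * ?N * (?N - 1)
        + 2 ^ ?d * real ?d * (2 * real q * (real q - 1) + real r * real q))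
      = 2 ^ ?d * (2 * ?N * ?N + real ?d * real (4 * q\<^sup>2 + 2 * r * q + r)) + ?N * ?diagonal"
    by (simp add: card_R algebra_simps power2_eq_square)
  also have "\<dots> \<le> 2 ^ ?d * (2 * ?N * ?N + ?S) + ?N * ?diagonal"
    using sum_pairs_coordinate_coincidences_ge[OF R card_R] by simp
  also have "\<dots> = (\<Sum>c\<in>R. \<Sum>c'\<in>R.
      2 ^ ?d * (2 + (\<Sum>i\<in>UNIV. ?\<delta> c c' i)) + (if c = c' then ?diagonal else 0))"
    using fin by (simp add: sum.distrib sum_distrib_left distrib_left mult_ac)
  also have "\<dots> \<le> (\<Sum>c\<in>R. \<Sum>c'\<in>R. 2 * (\<Prod>i\<in>UNIV. 2 + ?\<delta> c c' i))"
    by (intro sum_mono pointwise)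
  also have "\<dots> = 2 * (\<Sum>c\<in>R. \<Sum>c'\<in>R. \<Prod>i\<in>UNIV. 2 + ?\<delta> c c' i)"
    by (simp add: sum_distrib_left)
  finally show ?thesis
    by simp
qed

theorem theorem3:
  fixes CP :: "(int ^ 'd::finite) set" and q r :: nat
  assumes "cube_packing CP"
    and "num_cubes CP = 4 * q + r" and "r \<le> 3"
  shows "moment 1 CP = (3 ^ CARD('d) / 4 ^ CARD('d)) * real (num_cubes CP)
    \<and> moment 1 CP + real (num_cubes CP) * (real (num_cubes CP) - 1) * 2 powi (- int CARD('d))
        + 2 powi (- int CARD('d)) * real CARD('d) * (2 * real q * (real q - 1) + real r * real q)
      \<le> moment 2 CP"
proof -
  let ?d = "CARD('d)" and ?N = "real (num_cubes CP)"
  let ?X = "2 * real q * (real q - 1) + real r * real q"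
  have periodic: "\<And>y k. y \<in> CP \<Longrightarrow> y + (\<chi> i. 4 * k $ i) \<in> CP"
    using assms(1) by (simp add: cube_packing_def)
  have card_mod4: "card (mod4 ` CP) = num_cubes CP"
    by (simp add: num_cubes_def mod4_def[abs_def])
  have m1: "moment 1 CP = 3 ^ ?d / 4 ^ ?d * ?N"
    using moment_1_eq[OF periodic] by (simp only: card_mod4)
  have "moment 1 CP + ?N * (?N - 1) * 2 powi (- int ?d) + 2 powi (- int ?d) * real ?d * ?X
      = (3 ^ ?d * ?N + 2 ^ ?d * ?N * (?N - 1) + 2 ^ ?d * real ?d * ?X) / 4 ^ ?d"
    unfolding m1 by (simp add: power_int_minus field_simps flip: power_mult_distrib)
  also have "\<dots> \<le> moment 2 CP"
    using sum_pairs_prod_coincidences_ge[OF mod4_image_subset[of CP], of q r] assms(2)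
    by (simp add: moment_2_eq[OF periodic] card_mod4 divide_right_mono)
  finally show ?thesis
    using m1 by simp
qed

end
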